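(* Let $m\ge1$, $q=2^m$, $n=3$, let $a,b,c\in\mathbb F_{q^3}$, let $k$ be an integer with $0\le k<m$, and let $L(x)=\big(ax+bx^q+cx^{q^2}\big)^{2^k}$. Let $s=\gcd(k-1,m)$. Then $\mathrm{Tr}(x^{q+1})+L(x)$ is a permutation polynomial of $\mathbb F_{q^3}$ if and only if $(a+b+c)^{\frac{q-1}{2^s-1}}\ne1$ and either (a) $a+b+c\in\mathbb F_q^*$ and $a^{q^2+q+1}+b^{q^2+q+1}+c^{q^2+q+1}+\mathrm{Tr}\big(ab^qc^{q^2}\big)\ne0$, or (b) $a+b+c=0$ and $\mathrm{Tr}(a^{q+1}+a^qb+b^{q+1})\ne0$.
   Context: $\mathrm{Tr}(x)=x+x^q+x^{q^2}$ is the trace map of $\mathbb F_{q^3}$ over $\mathbb F_q$. Polynomials are regarded as maps on $\mathbb F_{q^3}$; a permutation polynomial is one inducing a bijection. *)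

theory Defs
  imports Main
begin

definition Tr3 :: "nat \<Rightarrow> 'a::field \<Rightarrow> 'a" where
  "Tr3 q x = x + x ^ q + x ^ (q ^ 2)"

definition is_perm :: "('a \<Rightarrow> 'a) \<Rightarrow> bool" where
  "is_perm f \<longleftrightarrow> bij f"

end

theory Submission
  imports Defs "HOL-Computational_Algebra.Polynomial"
begin

text \<open>
  Write d = a + b + c and M y = a y + b y^q + c y^(q^2), so that the polynomial is
  f x = Tr (x^(q+1)) + (M x)^(2^k). In characteristic two
  f (x + y) = f x + f y + Tr (x (y^q + y^(q^2))), hence f permutes the field iff no y \<noteq> 0 is a
  period, i.e. satisfies f (x + y) = f x for some x.

  For y in F_q the trace term vanishes and the condition is f y = y^2 + (d y)^(2^k) \<noteq> 0, which
  fails at y = d when k = 0. For k = j + 1 it says that d^(-2^j) is not a (2^j - 1)-th power in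
  F_q^*, and these powers are the elements whose order divides (q - 1) / (2^s - 1).

  For y outside F_q the factor y^q + y^(q^2) is nonzero, so the trace term takes every value in
  F_q, and the condition is M y \<notin> F_q. If d \<in> F_q^* this means that M is injective, if d = 0
  that M + Tr is injective (that is M with a, b, c replaced by a + 1, b + 1, c + 1), and if
  d \<notin> F_q it fails. Injectivity of such a q-linearized polynomial is decided by its Dickson
  determinant, which expands to the two expressions of the theorem.
\<close>

lemma card_le_of_poly_roots:
  fixes p :: "'a::idom poly"
  assumes "p \<noteq> 0" "degree p \<le> d" "\<And>x. x \<in> S \<Longrightarrow> poly p x = 0"
  shows "card S \<le> d"
proof -
  have "card S \<le> card {x. poly p x = 0}"
    using assms(3) by (intro card_mono poly_roots_finite assms(1)) auto
  also have "\<dots> \<le> degree p"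
    by (rule card_poly_roots_bound[OF assms(1)])
  finally show ?thesis using assms(2) by simp
qed

lemma card_roots_of_unity_le:
  fixes S :: "'a::idom set"
  assumes "0 < t" "\<And>y. y \<in> S \<Longrightarrow> y ^ t = 1"
  shows "card S \<le> t"
proof (rule card_le_of_poly_roots)
  have "coeff (monom 1 t - 1 :: 'a poly) t = 1"
    using assms(1) by simp
  then show "monom 1 t - 1 \<noteq> (0::'a poly)"
    by (metis coeff_0 one_neq_zero)
  show "degree (monom 1 t - 1 :: 'a poly) \<le> t"
    by (intro order.trans[OF degree_diff_le_max]) (auto simp: degree_monom_le)
qed (simp add: poly_monom assms(2))

lemma card_eq_card_image_mult:
  assumes "finite S" and "\<And>v. v \<in> h ` S \<Longrightarrow> card {x \<in> S. h x = v} = k"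
  shows "card S = card (h ` S) * k"
proof -
  have "card S = card (\<Union>v\<in>h ` S. {x \<in> S. h x = v})"
    by (rule arg_cong[where f = card]) auto
  also have "\<dots> = (\<Sum>v\<in>h ` S. card {x \<in> S. h x = v})"
    using assms(1) by (intro card_UN_disjoint) auto
  finally show ?thesis using assms(2) by simp
qed

lemma card_eq_card_range_mult_kernel:
  fixes h :: "'a::{ab_group_add,finite} \<Rightarrow> 'b::ab_group_add"
  assumes additive: "\<And>x y. h (x + y) = h x + h y"
  shows "card (UNIV :: 'a set) = card (range h) * card {x. h x = 0}"
proof (rule card_eq_card_image_mult)
  fix v assume "v \<in> range h"
  then obtain x0 where v: "v = h x0"
    by auto
  have "{x \<in> UNIV. h x = v} = (\<lambda>z. x0 + z) ` {z. h z = 0}"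
  proof (intro set_eqI iffI)
    fix x assume "x \<in> {x \<in> UNIV. h x = v}"
    moreover have "h x = h (x - x0) + h x0"
      using additive[of "x - x0" x0] by simp
    ultimately have "h (x - x0) = 0"
      using v by simp
    then show "x \<in> (\<lambda>z. x0 + z) ` {z. h z = 0}"
      by (intro image_eqI[where x = "x - x0"]) simp_all
  qed (use v additive in auto)
  also have "card \<dots> = card {z. h z = 0}"
    by (intro card_image) (simp add: inj_on_def)
  finally show "card {x \<in> UNIV. h x = v} = card {x. h x = 0}" .
qed simp

lemma inj_iff_no_period:
  fixes h :: "'a::ab_group_add \<Rightarrow> 'b"
  shows "inj h \<longleftrightarrow> (\<forall>y. y \<noteq> 0 \<longrightarrow> (\<forall>x. h (x + y) \<noteq> h x))"
proof
  assume "inj h"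
  then show "\<forall>y. y \<noteq> 0 \<longrightarrow> (\<forall>x. h (x + y) \<noteq> h x)"
    by (auto dest: injD)
next
  assume no_period: "\<forall>y. y \<noteq> 0 \<longrightarrow> (\<forall>x. h (x + y) \<noteq> h x)"
  show "inj h"
  proof (rule injI)
    fix x z
    assume "h x = h z"
    show "x = z"
    proof (rule ccontr)
      assume "x \<noteq> z"
      then have "x - z \<noteq> 0"
        by simp
      with no_period have "h (z + (x - z)) \<noteq> h z"
        by blast
      with \<open>h x = h z\<close> show False
        by simp
    qed
  qed
qed

section \<open>Greatest common divisors of numbers n^a - 1\<close>

lemma gcd_power_minus_one_diff:
  fixes n :: nat
  assumes "b \<le> a"
  shows "gcd (n ^ a - 1) (n ^ b - 1) = gcd (n ^ (a - b) - 1) (n ^ b - 1)"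
proof (cases "n = 0")
  case False
  have "1 \<le> n ^ (a - b)" "n ^ (a - b) \<le> n ^ a"
    using False by (simp_all add: Suc_le_eq power_increasing)
  moreover have "n ^ a = n ^ b * n ^ (a - b)"
    using assms by (simp add: power_add[symmetric])
  ultimately have "n ^ a - 1 = n ^ (a - b) * (n ^ b - 1) + (n ^ (a - b) - 1)"
    by (simp add: diff_mult_distrib2 mult.commute)
  then show ?thesis
    by (simp only: gcd.commute[of _ "n ^ b - 1"] gcd_add_mult)
qed (simp add: power_0_left)

lemma gcd_power_minus_one:
  fixes n :: nat
  shows "gcd (n ^ a - 1) (n ^ b - 1) = n ^ gcd a b - 1"
proof (induction "a + b" arbitrary: a b rule: less_induct)
  case less
  consider "a = 0" | "b = 0" | "0 < b" "b \<le> a" | "0 < a" "a \<le> b"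
    by linarith
  then show ?case
  proof cases
    case 3
    then show ?thesis
      using less[of "a - b" b] gcd_power_minus_one_diff[of b a n] by (simp add: gcd_diff1_nat)
  next
    case 4
    have "gcd (n ^ a - 1) (n ^ b - 1) = gcd (n ^ (b - a) - 1) (n ^ a - 1)"
      using gcd_power_minus_one_diff[of a b n] 4 by (simp add: gcd.commute)
    also have "\<dots> = n ^ gcd (b - a) a - 1"
      using less 4 by simp
    also have "gcd (b - a) a = gcd a b"
      using gcd_diff1_nat[of a b] 4 by (simp add: ac_simps)
    finally show ?thesis .
  qed (simp_all only: power_0 diff_self_eq_0 gcd_0_left_nat gcd_0_nat)
qed

lemma div_two_power_gcd_minus_one_pos:
  fixes j :: int
  assumes "1 \<le> m"
  shows "0 < ((2::nat) ^ m - 1) div (2 ^ nat (gcd j (int m)) - 1)"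
proof -
  define s where "s = nat (gcd j (int m))"
  have "0 < gcd j (int m)" "gcd j (int m) \<le> int m"
    using assms by (simp_all add: zdvd_imp_le)
  then have s: "1 \<le> s" "s \<le> m"
    unfolding s_def by linarith+
  have "(2::nat) ^ s \<le> 2 ^ m"
    by (rule power_increasing[OF s(2)]) simp
  then have "(2::nat) ^ s - 1 \<le> 2 ^ m - 1"
    by (rule diff_le_mono)
  moreover have "(2::nat) ^ 1 \<le> 2 ^ s"
    by (rule power_increasing[OF s(1)]) simp
  ultimately show ?thesis
    unfolding s_def[symmetric] div_greater_zero_iff by simp
qed

lemma char2_add_self:
  assumes "(2::'a::ring_1) = 0"
  shows "x + x = (0::'a)"
  by (metis assms mult_2 mult_zero_left)

lemma char2_add_eq_0_iff:
  assumes "(2::'a::ring_1) = 0"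
  shows "x + y = 0 \<longleftrightarrow> x = (y::'a)"
proof -
  have "- y = y"
    using char2_add_self[OF assms, of y] by (simp add: neg_eq_iff_add_eq_0)
  then show ?thesis
    by (metis eq_neg_iff_add_eq_0)
qed

lemma char2_power_two_power_add:
  assumes "(2::'a::comm_ring_1) = 0"
  shows "(x + y) ^ 2 ^ j = x ^ 2 ^ j + (y::'a) ^ 2 ^ j"
proof (induction j)
  case (Suc j)
  have "(x + y) ^ 2 ^ Suc j = ((x + y) ^ 2 ^ j)\<^sup>2"
    by (simp add: power_mult[symmetric] mult.commute)
  also have "\<dots> = (x ^ 2 ^ j)\<^sup>2 + (y ^ 2 ^ j)\<^sup>2 + 2 * x ^ 2 ^ j * y ^ 2 ^ j"
    by (simp add: Suc power2_sum)
  also have "\<dots> = x ^ 2 ^ Suc j + y ^ 2 ^ Suc j"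
    by (simp add: assms power_mult[symmetric] mult.commute)
  finally show ?case .
qed simp

lemma char2_power_two_power_eq_iff:
  assumes "(2::'a::field) = 0"
  shows "x ^ 2 ^ j = y ^ 2 ^ j \<longleftrightarrow> x = (y::'a)"
proof -
  have "x ^ 2 ^ j = y ^ 2 ^ j \<longleftrightarrow> (x + y) ^ 2 ^ j = 0"
    by (simp add: char2_power_two_power_add[OF assms] char2_add_eq_0_iff[OF assms])
  also have "\<dots> \<longleftrightarrow> x = y"
    by (simp add: char2_add_eq_0_iff[OF assms])
  finally show ?thesis .
qed

section \<open>Finite multiplicative subgroups of a field\<close>

locale finite_mult_subgroup =
  fixes G :: "'a::field set"
  assumes finite_G: "finite G"
    and zero_notin_G: "0 \<notin> G"
    and one_in_G: "1 \<in> G"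
    and mult_closed: "x \<in> G \<Longrightarrow> y \<in> G \<Longrightarrow> x * y \<in> G"
    and inverse_closed: "x \<in> G \<Longrightarrow> inverse x \<in> G"
begin

lemma card_G_pos: "0 < card G"
  using finite_G one_in_G by (auto simp: card_gt_0_iff)

lemma power_closed: "x \<in> G \<Longrightarrow> x ^ k \<in> G"
  by (induction k) (simp_all add: one_in_G mult_closed)

lemma power_card_eq_one:
  assumes "x \<in> G"
  shows "x ^ card G = 1"
proof -
  have inj: "inj_on (\<lambda>y. x * y) G"
    using assms zero_notin_G by (auto simp: inj_on_def)
  have "(\<lambda>y. x * y) ` G = G"
    using assms mult_closed card_image[OF inj] by (intro card_subset_eq finite_G) auto
  then have "\<Prod>G = (\<Prod>y\<in>G. x * y)"
    using prod.reindex[OF inj, of id] by simp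
  also have "\<dots> = x ^ card G * \<Prod>G"
    by (simp add: prod.distrib)
  finally show ?thesis
    using finite_G zero_notin_G by auto
qed

lemma power_eq_one_iff_gcd:
  assumes "y \<in> G"
  shows "y ^ r = 1 \<longleftrightarrow> y ^ gcd r (card G) = 1"
proof
  assume r: "y ^ r = 1"
  show "y ^ gcd r (card G) = 1"
  proof (cases "r = 0")
    case False
    then obtain u v where uv: "r * u = card G * v + gcd r (card G)"
      using bezout_nat by blast
    have "1 = (y ^ r) ^ u"
      using r by simp
    also have "\<dots> = (y ^ card G) ^ v * y ^ gcd r (card G)"
      by (simp add: power_mult[symmetric] power_add[symmetric] uv)
    finally show ?thesis
      using power_card_eq_one[OF assms] by simp
  qed (use power_card_eq_one[OF assms] in simp)
next
  assume "y ^ gcd r (card G) = 1"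
  moreover obtain t where "r = gcd r (card G) * t"
    by (metis dvdE gcd_dvd1)
  ultimately show "y ^ r = 1"
    by (metis power_mult power_one)
qed

lemma card_eq_card_image_power_mult:
  "card G = card ((\<lambda>y. y ^ r) ` G) * card {y \<in> G. y ^ r = 1}"
proof (rule card_eq_card_image_mult[OF finite_G])
  fix v assume "v \<in> (\<lambda>y. y ^ r) ` G"
  then obtain z where z: "z \<in> G" "v = z ^ r"
    by auto
  have z0: "z \<noteq> 0"
    using z zero_notin_G by auto
  have "{x \<in> G. x ^ r = v} = (\<lambda>u. z * u) ` {y \<in> G. y ^ r = 1}"
  proof (intro set_eqI iffI)
    fix x assume x: "x \<in> {x \<in> G. x ^ r = v}"
    then have "x / z \<in> G" "(x / z) ^ r = 1"
      using z z0 mult_closed inverse_closed by (simp_all add: divide_inverse power_mult_distrib power_inverse)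
    moreover have "x = z * (x / z)"
      using z0 by simp
    ultimately show "x \<in> (\<lambda>u. z * u) ` {y \<in> G. y ^ r = 1}"
      by blast
  qed (use z mult_closed in \<open>auto simp: power_mult_distrib\<close>)
  also have "card \<dots> = card {y \<in> G. y ^ r = 1}"
    using z0 by (intro card_image) (simp add: inj_on_def)
  finally show "card {x \<in> G. x ^ r = v} = card {y \<in> G. y ^ r = 1}" .
qed

text \<open>No cyclicity of G is needed: the fibres of the r-th power map are cosets of the group of
  r-th roots of unity, which has at most gcd r (card G) elements, and the image consists of
  roots of unity of degree card G div gcd r (card G).\<close>

lemma image_power_eq:
  "(\<lambda>y. y ^ r) ` G = {z \<in> G. z ^ (card G div gcd r (card G)) = 1}"
proof -
  define n where "n = card G"
  define g where "g = gcd r n"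
  have g: "0 < g" "g dvd n" "g dvd r"
    using card_G_pos by (simp_all add: g_def n_def)
  have n: "n = g * (n div g)"
    using g by simp
  have "n \<le> card ((\<lambda>y. y ^ r) ` G) * g"
  proof -
    have "{y \<in> G. y ^ r = 1} = {y \<in> G. y ^ g = 1}"
      using power_eq_one_iff_gcd by (auto simp: g_def n_def)
    then have "n = card ((\<lambda>y. y ^ r) ` G) * card {y \<in> G. y ^ g = 1}"
      using card_eq_card_image_power_mult[of r] by (simp add: n_def)
    also have "card {y \<in> G. y ^ g = 1} \<le> g"
      using g by (intro card_roots_of_unity_le) auto
    finally show ?thesis by simp
  qed
  then have lower: "n div g \<le> card ((\<lambda>y. y ^ r) ` G)"
    using g n by (metis mult.commute mult_le_cancel2)
  have sub: "(\<lambda>y. y ^ r) ` G \<subseteq> {z \<in> G. z ^ (n div g) = 1}"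
  proof clarify
    fix y assume y: "y \<in> G"
    obtain r' where "r = g * r'"
      using g by (metis dvdE)
    then have "(y ^ r) ^ (n div g) = (y ^ n) ^ r'"
      by (metis n mult.assoc mult.commute power_mult)
    then show "y ^ r \<in> G \<and> (y ^ r) ^ (n div g) = 1"
      using y power_card_eq_one[OF y] by (auto simp: n_def power_closed)
  qed
  have upper: "card {z \<in> G. z ^ (n div g) = 1} \<le> n div g"
  proof (rule card_roots_of_unity_le)
    show "0 < n div g"
      using n card_G_pos by (metis n_def gr0I mult_0_right)
  qed simp
  have "card ((\<lambda>y. y ^ r) ` G) \<le> card {z \<in> G. z ^ (n div g) = 1}"
    using finite_G by (intro card_mono[OF _ sub]) simp
  with lower upper have "(\<lambda>y. y ^ r) ` G = {z \<in> G. z ^ (n div g) = 1}"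
    using finite_G by (intro card_subset_eq[OF _ sub]) auto
  then show ?thesis
    by (simp add: n_def g_def)
qed

end

lemma power_card_UNIV_eq_self:
  fixes x :: "'a::{field,finite}"
  shows "x ^ card (UNIV :: 'a set) = x"
proof (cases "x = 0")
  case False
  interpret units: finite_mult_subgroup "UNIV - {0::'a}"
    by unfold_locales auto
  have "0 < card (UNIV :: 'a set)"
    by (simp add: finite_UNIV_card_ge_0)
  then have card_eq: "card (UNIV :: 'a set) = Suc (card (UNIV - {0::'a}))"
    by (simp add: card_Diff_singleton)
  have "x ^ card (UNIV - {0::'a}) = 1"
    using False by (intro units.power_card_eq_one) simp
  moreover have "x ^ card (UNIV :: 'a set) = x * x ^ card (UNIV - {0::'a})"
    unfolding card_eq by (rule power_Suc)
  ultimately show ?thesis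
    by simp
qed (simp add: finite_UNIV_card_ge_0 zero_power)

section \<open>The extension of degree three of F_q, q = 2^m\<close>

locale cubic_extension_char2 =
  fixes q m :: nat and frob :: "'a::{field,finite} \<Rightarrow> 'a"
  assumes card_UNIV: "card (UNIV :: 'a set) = q ^ 3"
    and q_eq: "q = 2 ^ m"
    and m_pos: "1 \<le> m"
    and frob_eq: "frob x = x ^ q"
begin

lemma q_ge_2: "2 \<le> q"
  using power_increasing[OF m_pos, of "2::nat"] by (simp add: q_eq)

lemma q_sq_less_card_UNIV: "q ^ 2 < card (UNIV :: 'a set)"
  using q_ge_2 by (simp add: card_UNIV power3_eq_cube power2_eq_square)

lemma two_eq_zero: "(2::'a) = 0"
proof -
  have "(-1::'a) ^ q ^ 3 = -1"
    using power_card_UNIV_eq_self[of "-1::'a"] by (simp add: card_UNIV)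
  moreover have "even (q ^ 3)"
    using m_pos by (simp add: q_eq)
  ultimately have "(1::'a) = -1"
    by simp
  then have "(2::'a) = 1 + -1"
    by (metis one_add_one)
  then show ?thesis
    by simp
qed

lemmas add_self_eq_0 [simp] = char2_add_self[OF two_eq_zero]
lemmas add_eq_0_iff_eq = char2_add_eq_0_iff[OF two_eq_zero]
lemmas power_two_power_add = char2_power_two_power_add[OF two_eq_zero]
lemmas power_two_power_eq_iff = char2_power_two_power_eq_iff[OF two_eq_zero]

lemma minus_eq_self [simp]: "- x = (x::'a)"
  using add_eq_0_iff_eq[of x "- x"] by simp

lemma diff_eq_add [simp]: "x - y = x + (y::'a)"
  by simp

lemma frob_add [simp]: "frob (x + y) = frob x + frob y"
  by (simp add: frob_eq q_eq power_two_power_add)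

lemma frob_mult [simp]: "frob (x * y) = frob x * frob y"
  by (simp add: frob_eq power_mult_distrib)

lemma frob_power [simp]: "frob (x ^ n) = frob x ^ n"
  by (simp add: frob_eq power_mult[symmetric] mult.commute)

lemma frob_inverse [simp]: "frob (inverse x) = inverse (frob x)"
  by (simp add: frob_eq power_inverse)

lemma frob_diff: "frob (x - y) = frob x - frob y"
  by simp

lemma frob_0 [simp]: "frob 0 = 0"
  using q_ge_2 by (simp add: frob_eq)

lemma frob_1 [simp]: "frob 1 = 1"
  by (simp add: frob_eq)

lemma frob_frob_frob [simp]: "frob (frob (frob x)) = x"
  using power_card_UNIV_eq_self[of x]
  by (simp add: frob_eq card_UNIV power_mult[symmetric] power3_eq_cube)

lemma frob_eq_iff [simp]: "frob x = frob y \<longleftrightarrow> x = y"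
  by (metis frob_frob_frob)

lemma power_q_eq: "x ^ q = frob x"
  by (simp add: frob_eq)

lemma power_q_sq_eq: "x ^ q\<^sup>2 = frob (frob x)"
  by (simp add: frob_eq power2_eq_square power_mult)

lemma Tr3_eq: "Tr3 q x = x + frob x + frob (frob x)"
  by (simp add: Tr3_def power_q_eq power_q_sq_eq)

lemma frob_Tr3 [simp]: "frob (Tr3 q x) = Tr3 q x"
  by (simp add: Tr3_eq ac_simps)

lemma power_norm_eq: "x ^ (q\<^sup>2 + q + 1) = x * frob x * frob (frob x)"
  by (simp add: power_add power_q_eq power_q_sq_eq ac_simps)

definition Fq :: "'a set" where
  "Fq = {x. frob x = x}"

lemma Fq_iff: "x \<in> Fq \<longleftrightarrow> frob x = x"
  by (simp add: Fq_def)

lemma Fq_0 [simp]: "0 \<in> Fq" and Fq_1 [simp]: "1 \<in> Fq"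
  by (simp_all add: Fq_iff)

lemma Fq_add: "x \<in> Fq \<Longrightarrow> y \<in> Fq \<Longrightarrow> x + y \<in> Fq"
  and Fq_mult: "x \<in> Fq \<Longrightarrow> y \<in> Fq \<Longrightarrow> x * y \<in> Fq"
  and Fq_inverse: "x \<in> Fq \<Longrightarrow> inverse x \<in> Fq"
  and Fq_power_two_power_iff: "x ^ 2 ^ j \<in> Fq \<longleftrightarrow> x \<in> Fq"
  and Tr3_in_Fq: "Tr3 q x \<in> Fq"
  by (simp_all add: Fq_iff power_two_power_eq_iff)

lemma Tr3_Fq: "x \<in> Fq \<Longrightarrow> Tr3 q x = x"
  by (simp add: Fq_iff Tr3_eq)

sublocale Fq_units: finite_mult_subgroup "Fq - {0}"
  by unfold_locales (auto intro: Fq_mult Fq_inverse)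

lemma card_Fq_le: "card Fq \<le> q"
proof (rule card_le_of_poly_roots)
  have "coeff (monom 1 q - [:0, 1:] :: 'a poly) q = 1"
    using q_ge_2 by (simp add: coeff_pCons split: nat.splits)
  then show "monom 1 q - [:0, 1:] \<noteq> (0 :: 'a poly)"
    by (metis coeff_0 one_neq_zero)
  show "degree (monom 1 q - [:0, 1:] :: 'a poly) \<le> q"
    using q_ge_2 by (intro order.trans[OF degree_diff_le_max]) (auto simp: degree_monom_eq)
qed (simp add: poly_monom Fq_iff frob_eq)

lemma card_Tr3_kernel_le: "card {x::'a. Tr3 q x = 0} \<le> q\<^sup>2"
proof (rule card_le_of_poly_roots)
  define p :: "'a poly" where "p = monom 1 (q\<^sup>2) + monom 1 q + [:0, 1:]"
  have q: "q\<^sup>2 \<noteq> q" "q\<^sup>2 \<noteq> 1" "q \<le> q\<^sup>2"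
    using q_ge_2 by (auto simp: power2_eq_square)
  then have "coeff p (q\<^sup>2) = 1"
    by (simp add: p_def coeff_pCons split: nat.splits)
  then show "p \<noteq> 0"
    by (metis coeff_0 one_neq_zero)
  show "degree p \<le> q\<^sup>2"
    unfolding p_def using q
    by (intro order.trans[OF degree_add_le_max] max.boundedI order.trans[OF degree_monom_le]) auto
  show "poly p x = 0" if "x \<in> {x. Tr3 q x = 0}" for x
    using that by (simp add: p_def poly_monom Tr3_def ac_simps)
qed

lemma range_Tr3: "range (Tr3 q :: 'a \<Rightarrow> 'a) = Fq" and card_Fq: "card Fq = q"
proof -
  have "\<And>x y::'a. Tr3 q (x + y) = Tr3 q x + Tr3 q y"
    by (simp add: Tr3_eq ac_simps)
  then have "card (UNIV :: 'a set) = card (range (Tr3 q :: 'a \<Rightarrow> 'a)) * card {x::'a. Tr3 q x = 0}"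
    by (rule card_eq_card_range_mult_kernel)
  then have "q * q\<^sup>2 = card (range (Tr3 q :: 'a \<Rightarrow> 'a)) * card {x::'a. Tr3 q x = 0}"
    by (simp add: card_UNIV power3_eq_cube power2_eq_square)
  also have "\<dots> \<le> card (range (Tr3 q :: 'a \<Rightarrow> 'a)) * q\<^sup>2"
    using card_Tr3_kernel_le by simp
  finally have lower: "q \<le> card (range (Tr3 q :: 'a \<Rightarrow> 'a))"
    using q_ge_2 by simp
  have sub: "range (Tr3 q :: 'a \<Rightarrow> 'a) \<subseteq> Fq"
    using Tr3_in_Fq by auto
  then have "card (range (Tr3 q :: 'a \<Rightarrow> 'a)) \<le> card Fq"
    by (intro card_mono) auto
  with lower card_Fq_le have eq: "card (range (Tr3 q :: 'a \<Rightarrow> 'a)) = card Fq"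
    by simp
  show "range (Tr3 q :: 'a \<Rightarrow> 'a) = Fq"
    by (rule card_subset_eq[OF _ sub eq]) simp
  show "card Fq = q"
    using eq lower card_Fq_le by simp
qed

lemma card_Fq_units: "card (Fq - {0}) = q - 1"
  by (simp add: card_Diff_singleton card_Fq)

section \<open>Linearized polynomials and the Dickson determinant\<close>

definition linpoly :: "'a \<Rightarrow> 'a \<Rightarrow> 'a \<Rightarrow> 'a \<Rightarrow> 'a" where
  "linpoly a b c y = a * y + b * frob y + c * frob (frob y)"

text \<open>The determinant of the Dickson matrix of linpoly a b c, with rows (a, b, c),
  (frob c, frob a, frob b) and (frob (frob b), frob (frob c), frob (frob a)).\<close>

definition dickson_det :: "'a \<Rightarrow> 'a \<Rightarrow> 'a \<Rightarrow> 'a" where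
  "dickson_det a b c =
     a * frob a * frob (frob a) + b * frob b * frob (frob b) + c * frob c * frob (frob c)
     - (a * frob b * frob (frob c) + frob a * frob (frob b) * c + frob (frob a) * b * frob c)"

lemma linpoly_add: "linpoly a b c (y + z) = linpoly a b c y + linpoly a b c z"
  by (simp add: linpoly_def algebra_simps)

lemma linpoly_0 [simp]: "linpoly a b c 0 = 0"
  by (simp add: linpoly_def)

lemma linpoly_Fq: "r \<in> Fq \<Longrightarrow> linpoly a b c r = (a + b + c) * r"
  by (simp add: Fq_iff linpoly_def algebra_simps)

lemma linpoly_add_one: "linpoly (a + 1) (b + 1) (c + 1) y = linpoly a b c y + Tr3 q y"
  by (simp add: linpoly_def Tr3_eq algebra_simps)

lemma inj_linpoly_iff: "inj (linpoly a b c) \<longleftrightarrow> (\<forall>y. linpoly a b c y = 0 \<longrightarrow> y = 0)"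
proof (intro iffI allI impI injI)
  fix y
  assume "inj (linpoly a b c)" "linpoly a b c y = 0"
  then show "y = 0"
    by (metis injD linpoly_0)
next
  fix x z
  assume "\<forall>y. linpoly a b c y = 0 \<longrightarrow> y = 0" "linpoly a b c x = linpoly a b c z"
  then show "x = z"
    by (metis add_eq_0_iff_eq linpoly_add)
qed

text \<open>The coefficients are the first row of the adjugate of the Dickson matrix.\<close>

lemma linpoly_adjugate_left:
  "linpoly (frob a * frob (frob a) - frob b * frob (frob c)) (c * frob (frob c) - frob (frob a) * b)
      (b * frob b - frob a * c) (linpoly a b c y) = dickson_det a b c * y"
  unfolding linpoly_def dickson_det_def
  by (simp only: frob_add frob_mult frob_diff frob_frob_frob) algebra

lemma linpoly_adjugate_right:
  "linpoly a b c (linpoly (frob a * frob (frob a) - frob b * frob (frob c))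
      (c * frob (frob c) - frob (frob a) * b) (b * frob b - frob a * c) z) = dickson_det a b c * z"
  unfolding linpoly_def dickson_det_def
  by (simp only: frob_add frob_mult frob_diff frob_frob_frob) algebra

lemma linpoly_eq_0_imp_coeffs_eq_0:
  assumes "\<And>z. linpoly n0 n1 n2 z = 0"
  shows "n0 = 0 \<and> n1 = 0 \<and> n2 = 0"
proof -
  define p where "p = monom n0 1 + monom n1 q + monom n2 (q\<^sup>2)"
  have q: "q\<^sup>2 \<noteq> q" "q\<^sup>2 \<noteq> 1" "q \<noteq> 1" "q \<le> q\<^sup>2"
    using q_ge_2 by (auto simp: power2_eq_square)
  have "degree p \<le> q\<^sup>2"
    unfolding p_def using q
    by (intro order.trans[OF degree_add_le_max] max.boundedI order.trans[OF degree_monom_le]) auto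
  moreover have "poly p x = 0" for x
    using assms[of x] by (simp add: p_def poly_monom linpoly_def power_q_eq power_q_sq_eq)
  ultimately have "p = 0"
    using card_le_of_poly_roots[of p "q\<^sup>2" UNIV] q_sq_less_card_UNIV by fastforce
  then have "coeff p 1 = 0" "coeff p q = 0" "coeff p (q\<^sup>2) = 0"
    by simp_all
  then show ?thesis
    using q by (simp add: p_def)
qed

lemma not_surj_if_frob_relation:
  assumes "\<mu> \<noteq> 0" and "\<And>y. \<mu> * frob (f y) = \<nu> * f y"
  shows "\<not> surj (f :: 'a \<Rightarrow> 'a)"
proof
  assume "surj f"
  define p where "p = monom \<mu> q - [:0, \<nu>:]"
  have "coeff p q = \<mu>"
    using q_ge_2 by (simp add: p_def coeff_pCons split: nat.splits)
  then have "p \<noteq> 0"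
    using assms(1) by auto
  moreover have "degree p \<le> q"
    unfolding p_def using q_ge_2
    by (intro order.trans[OF degree_diff_le_max]) (auto simp: degree_monom_le)
  moreover have "poly p x = 0" for x
  proof -
    obtain y where "x = f y"
      using \<open>surj f\<close> by (metis surjD)
    then show ?thesis
      using assms(2)[of y] by (simp add: p_def poly_monom frob_eq two_eq_zero)
  qed
  ultimately have "card (UNIV :: 'a set) \<le> q"
    using card_le_of_poly_roots[of p q UNIV] by blast
  moreover have "q \<le> q\<^sup>2"
    using q_ge_2 by (simp add: power2_eq_square)
  ultimately show False
    using q_sq_less_card_UNIV by linarith
qed

lemma not_surj_linpoly_if_minors_vanish:
  assumes r1: "a * frob a = b * frob c" and r2: "a * frob b = c * frob c"
    and r3: "b * frob b = frob a * c"
    and nonzero: "a \<noteq> 0 \<or> b \<noteq> 0 \<or> c \<noteq> 0"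
  shows "\<not> surj (linpoly a b c)"
proof -
  consider "a \<noteq> 0" | "b \<noteq> 0" | "c \<noteq> 0"
    using nonzero by blast
  then show ?thesis
  proof cases
    case 1
    have "a * frob (linpoly a b c y) = frob c * linpoly a b c y" for y
      unfolding linpoly_def using r1 r2 by (simp only: frob_add frob_mult frob_frob_frob) algebra
    then show ?thesis
      using not_surj_if_frob_relation[OF 1] by blast
  next
    case 2
    have "b * frob (linpoly a b c y) = frob a * linpoly a b c y" for y
      unfolding linpoly_def using r1 r3 by (simp only: frob_add frob_mult frob_frob_frob) algebra
    then show ?thesis
      using not_surj_if_frob_relation[OF 2] by blast
  next
    case 3
    have "c * frob (linpoly a b c y) = frob b * linpoly a b c y" for y
      unfolding linpoly_def using r2 r3 by (simp only: frob_add frob_mult frob_frob_frob) algebra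
    then show ?thesis
      using not_surj_if_frob_relation[OF 3] by blast
  qed
qed

lemma linpoly_kernel_trivial_iff:
  "(\<forall>y. linpoly a b c y = 0 \<longrightarrow> y = 0) \<longleftrightarrow> dickson_det a b c \<noteq> 0"
proof
  assume trivial: "\<forall>y. linpoly a b c y = 0 \<longrightarrow> y = 0"
  show "dickson_det a b c \<noteq> 0"
  proof
    assume det: "dickson_det a b c = 0"
    define n0 where "n0 = frob a * frob (frob a) - frob b * frob (frob c)"
    define n1 where "n1 = c * frob (frob c) - frob (frob a) * b"
    define n2 where "n2 = b * frob b - frob a * c"
    have "linpoly n0 n1 n2 z = 0" for z
      using linpoly_adjugate_right[of a b c z] det trivial by (simp add: n0_def n1_def n2_def)
    then have n: "n0 = 0" "n1 = 0" "n2 = 0"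
      using linpoly_eq_0_imp_coeffs_eq_0 by blast+
    have "a * frob a = b * frob c"
      using arg_cong[OF arg_cong[OF n(1), of frob], of frob] by (simp add: n0_def add_eq_0_iff_eq)
    moreover have "a * frob b = c * frob c"
      using arg_cong[OF n(2), of frob] by (simp add: n1_def ac_simps add_eq_0_iff_eq)
    moreover have "b * frob b = frob a * c"
      using n(3) by (simp add: n2_def add_eq_0_iff_eq)
    moreover have "a \<noteq> 0 \<or> b \<noteq> 0 \<or> c \<noteq> 0"
      using trivial[rule_format, of 1] by (auto simp: linpoly_def)
    moreover have "surj (linpoly a b c)"
      using trivial by (simp add: finite_UNIV_inj_surj inj_linpoly_iff)
    ultimately show False
      using not_surj_linpoly_if_minors_vanish by blast
  qed
next
  assume "dickson_det a b c \<noteq> 0"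
  then show "\<forall>y. linpoly a b c y = 0 \<longrightarrow> y = 0"
    using linpoly_adjugate_left[of a b c] by (metis linpoly_0 mult_eq_0_iff)
qed

section \<open>The permutation criterion\<close>

definition Fpoly :: "'a \<Rightarrow> 'a \<Rightarrow> 'a \<Rightarrow> nat \<Rightarrow> 'a \<Rightarrow> 'a" where
  "Fpoly a b c k x = Tr3 q (x ^ (q + 1)) + linpoly a b c x ^ 2 ^ k"

lemma Fpoly_eq:
  "Fpoly a b c k x = Tr3 q (x ^ (q + 1)) + (a * x + b * x ^ q + c * x ^ q\<^sup>2) ^ 2 ^ k"
  by (simp add: Fpoly_def linpoly_def power_q_eq power_q_sq_eq)

lemma Tr3_power_q_plus_1: "Tr3 q (x ^ (q + 1)) = frob x * x + frob (frob x) * frob x + x * frob (frob x)"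
  by (simp add: Tr3_eq power_q_eq ac_simps)

lemma Fpoly_add:
  "Fpoly a b c k (x + y) = Fpoly a b c k x + Fpoly a b c k y + Tr3 q (x * (frob y + frob (frob y)))"
  unfolding Fpoly_def Tr3_power_q_plus_1 linpoly_add power_two_power_add
  by (simp add: Tr3_eq algebra_simps)

lemma Fpoly_Fq: "y \<in> Fq \<Longrightarrow> Fpoly a b c k y = y * y + ((a + b + c) * y) ^ 2 ^ k"
  unfolding Fpoly_def Tr3_power_q_plus_1 by (simp add: linpoly_Fq Fq_iff)

lemma Fpoly_period_Fq:
  assumes "y \<in> Fq"
  shows "(\<exists>x. Fpoly a b c k (x + y) = Fpoly a b c k x) \<longleftrightarrow> Fpoly a b c k y = 0"
  using assms by (simp add: Fpoly_add Fq_iff add.assoc Tr3_eq)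

lemma Fpoly_period_not_Fq:
  assumes "y \<notin> Fq"
  shows "(\<exists>x. Fpoly a b c k (x + y) = Fpoly a b c k x) \<longleftrightarrow> linpoly a b c y \<in> Fq"
proof -
  have w: "frob y + frob (frob y) \<noteq> 0"
    using assms by (auto simp: Fq_iff add_eq_0_iff_eq)
  have "Fpoly a b c k (x + y) = Fpoly a b c k x
      \<longleftrightarrow> Tr3 q (x * (frob y + frob (frob y))) = Fpoly a b c k y" for x
    unfolding Fpoly_add add.assoc add_cancel_left_right add_eq_0_iff_eq by (rule eq_commute)
  then have "(\<exists>x. Fpoly a b c k (x + y) = Fpoly a b c k x)
      \<longleftrightarrow> (\<exists>x. Tr3 q (x * (frob y + frob (frob y))) = Fpoly a b c k y)"
    by simp
  also have "\<dots> \<longleftrightarrow> Fpoly a b c k y \<in> Fq"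
  proof
    assume "Fpoly a b c k y \<in> Fq"
    then obtain x where "Tr3 q x = Fpoly a b c k y"
      by (metis range_Tr3 rangeE)
    then have "Tr3 q ((x / (frob y + frob (frob y))) * (frob y + frob (frob y))) = Fpoly a b c k y"
      using w by simp
    then show "\<exists>x. Tr3 q (x * (frob y + frob (frob y))) = Fpoly a b c k y" ..
  next
    assume "\<exists>x. Tr3 q (x * (frob y + frob (frob y))) = Fpoly a b c k y"
    then obtain x where "Tr3 q (x * (frob y + frob (frob y))) = Fpoly a b c k y"
      by blast
    then show "Fpoly a b c k y \<in> Fq"
      using Tr3_in_Fq by metis
  qed
  also have "\<dots> \<longleftrightarrow> linpoly a b c y ^ 2 ^ k \<in> Fq"
  proof
    have "linpoly a b c y ^ 2 ^ k = Tr3 q (y ^ (q + 1)) + Fpoly a b c k y"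
      by (simp add: Fpoly_def add.assoc[symmetric])
    also assume "Fpoly a b c k y \<in> Fq"
    then have "Tr3 q (y ^ (q + 1)) + Fpoly a b c k y \<in> Fq"
      by (intro Fq_add Tr3_in_Fq)
    finally show "linpoly a b c y ^ 2 ^ k \<in> Fq" .
  qed (unfold Fpoly_def, intro Fq_add Tr3_in_Fq)
  also have "\<dots> \<longleftrightarrow> linpoly a b c y \<in> Fq"
    by (rule Fq_power_two_power_iff)
  finally show ?thesis .
qed

lemma bij_Fpoly_iff:
  "bij (Fpoly a b c k) \<longleftrightarrow>
    (\<forall>y\<in>Fq - {0}. y * y + ((a + b + c) * y) ^ 2 ^ k \<noteq> 0) \<and>
    (\<forall>y. y \<notin> Fq \<longrightarrow> linpoly a b c y \<notin> Fq)"
proof -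
  define period where "period y \<longleftrightarrow> (\<exists>x. Fpoly a b c k (x + y) = Fpoly a b c k x)" for y
  have "bij (Fpoly a b c k) \<longleftrightarrow> inj (Fpoly a b c k)"
    using finite_UNIV_inj_surj[of "Fpoly a b c k"] unfolding bij_def by auto
  also have "\<dots> \<longleftrightarrow> (\<forall>y. y \<noteq> 0 \<longrightarrow> \<not> period y)"
    unfolding inj_iff_no_period period_def by blast
  also have "\<dots> \<longleftrightarrow> (\<forall>y\<in>Fq - {0}. \<not> period y) \<and> (\<forall>y. y \<notin> Fq \<longrightarrow> \<not> period y)"
    by auto (metis Fq_0)
  finally show ?thesis
    by (simp add: period_def Fpoly_period_Fq Fpoly_period_not_Fq Fpoly_Fq)
qed

lemma Fq_units_condition_iff:
  assumes d: "d \<in> Fq - {0}"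
  shows "(\<forall>y\<in>Fq - {0}. y * y + (d * y) ^ 2 ^ k \<noteq> 0) \<longleftrightarrow>
         d ^ ((q - 1) div (2 ^ nat (gcd (int k - 1) (int m)) - 1)) \<noteq> 1"
proof (cases k)
  case 0
  then have "d * d + (d * d) ^ 2 ^ k = 0" and "nat (gcd (int k - 1) (int m)) = 1"
    by simp_all
  then show ?thesis
    using d Fq_units.power_card_eq_one[OF d] by (auto simp: card_Fq_units)
next
  case (Suc j)
  define r where "r = (2::nat) ^ j - 1"
  define D where "D = d ^ 2 ^ j"
  have D: "D \<in> Fq - {0}"
    unfolding D_def using d by (rule Fq_units.power_closed)
  have gcd_eq: "2 ^ nat (gcd (int k - 1) (int m)) - 1 = gcd r (q - 1)"
    using gcd_power_minus_one[of 2 j m] by (simp add: Suc r_def q_eq)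
  have root_iff: "y * y + (d * y) ^ 2 ^ k = 0 \<longleftrightarrow> inverse D = y ^ r" if y: "y \<in> Fq - {0}" for y
  proof -
    have "(d * y) ^ 2 ^ k = ((d * y) ^ 2 ^ j) ^ 2 ^ 1"
      by (simp add: Suc power_mult[symmetric] mult.commute)
    then have "y * y + (d * y) ^ 2 ^ k = 0 \<longleftrightarrow> y = (d * y) ^ 2 ^ j"
      using power_two_power_eq_iff[of y 1 "(d * y) ^ 2 ^ j"]
      by (simp add: add_eq_0_iff_eq power2_eq_square)
    also have "(d * y) ^ 2 ^ j = D * y * y ^ r"
      by (simp add: D_def r_def power_mult_distrib flip: power_Suc)
    also have "y = D * y * y ^ r \<longleftrightarrow> inverse D = y ^ r"
      using y D by (auto simp: field_simps)
    finally show ?thesis .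
  qed
  have "(\<exists>y\<in>Fq - {0}. y * y + (d * y) ^ 2 ^ k = 0) \<longleftrightarrow> inverse D \<in> (\<lambda>y. y ^ r) ` (Fq - {0})"
    unfolding image_iff using root_iff by simp
  also have "\<dots> \<longleftrightarrow> inverse D ^ ((q - 1) div gcd r (q - 1)) = 1"
    using Fq_units.inverse_closed[OF D] by (simp add: Fq_units.image_power_eq card_Fq_units)
  also have "\<dots> \<longleftrightarrow> (d ^ ((q - 1) div gcd r (q - 1))) ^ 2 ^ j = 1 ^ 2 ^ j"
    by (simp add: D_def power_inverse power_mult[symmetric] mult.commute)
  also have "\<dots> \<longleftrightarrow> d ^ ((q - 1) div gcd r (q - 1)) = 1"
    by (rule power_two_power_eq_iff)
  finally show ?thesis
    unfolding gcd_eq by blast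
qed

lemma linpoly_outside_Fq_iff_dickson_det:
  assumes "a + b + c \<in> Fq - {0}"
  shows "(\<forall>y. y \<notin> Fq \<longrightarrow> linpoly a b c y \<notin> Fq) \<longleftrightarrow> dickson_det a b c \<noteq> 0"
  unfolding linpoly_kernel_trivial_iff[symmetric]
proof (intro iffI allI impI notI)
  fix y
  assume non_Fq: "\<forall>y. y \<notin> Fq \<longrightarrow> linpoly a b c y \<notin> Fq" and "linpoly a b c y = 0"
  then have "y \<in> Fq"
    using Fq_0 by metis
  with \<open>linpoly a b c y = 0\<close> have "(a + b + c) * y = 0"
    by (simp add: linpoly_Fq)
  with assms show "y = 0"
    by simp
next
  fix y
  assume trivial: "\<forall>y. linpoly a b c y = 0 \<longrightarrow> y = 0" and "y \<notin> Fq" "linpoly a b c y \<in> Fq"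
  define r where "r = linpoly a b c y / (a + b + c)"
  have r: "r \<in> Fq"
    unfolding r_def divide_inverse using assms \<open>linpoly a b c y \<in> Fq\<close> by (auto intro: Fq_mult Fq_inverse)
  then have "linpoly a b c (y + r) = 0"
    using assms by (simp add: linpoly_add linpoly_Fq r_def)
  then have "y + r = 0"
    using trivial by blast
  then have "y = r"
    by (simp add: add_eq_0_iff_eq)
  with \<open>y \<notin> Fq\<close> r show False
    by simp
qed

lemma ex_outside_Fq_linpoly_in_Fq:
  assumes "a + b + c \<notin> Fq"
  shows "\<exists>y. y \<notin> Fq \<and> linpoly a b c y \<in> Fq"
proof (cases "\<forall>y. linpoly a b c y = 0 \<longrightarrow> y = 0")
  case True
  then have "surj (linpoly a b c)"
    by (simp add: finite_UNIV_inj_surj inj_linpoly_iff)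
  then obtain y where y: "linpoly a b c y = 1"
    by (metis surjD)
  have "y \<notin> Fq"
  proof
    assume "y \<in> Fq"
    then have "y * (a + b + c) = 1"
      using y linpoly_Fq[of y a b c] by (simp add: mult.commute)
    then have "a + b + c = inverse y"
      by (rule inverse_unique[symmetric])
    with assms Fq_inverse[OF \<open>y \<in> Fq\<close>] show False
      by simp
  qed
  with y show ?thesis
    by (intro exI[of _ y]) simp
next
  case False
  then obtain y where "linpoly a b c y = 0" "y \<noteq> 0"
    by blast
  moreover have "y \<notin> Fq"
  proof
    assume "y \<in> Fq"
    with \<open>linpoly a b c y = 0\<close> have "(a + b + c) * y = 0"
      by (simp add: linpoly_Fq)
    with \<open>y \<noteq> 0\<close> assms show False
      by simp
  qed
  ultimately show ?thesis
    by (intro exI[of _ y]) simp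
qed

lemma linpoly_outside_Fq_iff_dickson_det_add_one:
  assumes "a + b + c = 0"
  shows "(\<forall>y. y \<notin> Fq \<longrightarrow> linpoly a b c y \<notin> Fq) \<longleftrightarrow> dickson_det (a + 1) (b + 1) (c + 1) \<noteq> 0"
  unfolding linpoly_kernel_trivial_iff[symmetric]
proof (intro iffI allI impI notI)
  fix y
  assume non_Fq: "\<forall>y. y \<notin> Fq \<longrightarrow> linpoly a b c y \<notin> Fq" and "linpoly (a + 1) (b + 1) (c + 1) y = 0"
  then have y: "linpoly a b c y = Tr3 q y"
    by (simp add: linpoly_add_one add_eq_0_iff_eq)
  then have "y \<in> Fq"
    using non_Fq Tr3_in_Fq[of y] by metis
  then show "y = 0"
    using y assms by (simp add: linpoly_Fq Tr3_Fq)
next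
  fix y
  assume trivial: "\<forall>y. linpoly (a + 1) (b + 1) (c + 1) y = 0 \<longrightarrow> y = 0"
    and "y \<notin> Fq" "linpoly a b c y \<in> Fq"
  define r where "r = linpoly a b c y + Tr3 q y"
  have r: "r \<in> Fq"
    unfolding r_def using \<open>linpoly a b c y \<in> Fq\<close> by (intro Fq_add Tr3_in_Fq)
  have "linpoly (a + 1) (b + 1) (c + 1) r = linpoly (a + 1) (b + 1) (c + 1) y"
    using r assms by (simp add: linpoly_add_one linpoly_Fq Tr3_Fq) (simp add: r_def linpoly_add_one)
  then have "linpoly (a + 1) (b + 1) (c + 1) (y + r) = 0"
    by (simp add: linpoly_add)
  then have "y + r = 0"
    using trivial by blast
  then have "y = r"
    by (simp add: add_eq_0_iff_eq)
  with \<open>y \<notin> Fq\<close> r show False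
    by simp
qed

lemma dickson_det_eq:
  "dickson_det a b c = a ^ (q\<^sup>2 + q + 1) + b ^ (q\<^sup>2 + q + 1) + c ^ (q\<^sup>2 + q + 1)
     + Tr3 q (a * b ^ q * c ^ q\<^sup>2)"
  unfolding dickson_det_def power_norm_eq Tr3_eq power_q_eq power_q_sq_eq
  by (simp add: ac_simps)

lemma dickson_det_add_one:
  assumes "a + b + c = 0"
  shows "dickson_det (a + 1) (b + 1) (c + 1) = Tr3 q (a ^ (q + 1) + a ^ q * b + b ^ (q + 1))"
proof -
  have c: "c = a + b"
    using assms by (simp add: add_eq_0_iff_eq)
  have expand:
    "(a0+1)*(a1+1)*(a2+1) + (b0+1)*(b1+1)*(b2+1) + (a0+b0+1)*(a1+b1+1)*(a2+b2+1)
      - ((a0+1)*(b1+1)*(a2+b2+1) + (a1+1)*(b2+1)*(a0+b0+1) + (a2+1)*(b0+1)*(a1+b1+1))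
     = a1*a0 + a1*b0 + b1*b0 + a2*a1 + a2*b1 + b2*b1 + a0*a2 + a0*b2 + b0*b2
       + 2 * (a0*a1*a2 + b0*b1*b2 - a0*b2 - a1*b0 - a2*b1)" for a0 a1 a2 b0 b1 b2 :: 'a
    by algebra
  have "dickson_det (a + 1) (b + 1) (c + 1) =
      frob a * a + frob a * b + frob b * b + frob (frob a) * frob a + frob (frob a) * frob b
      + frob (frob b) * frob b + a * frob (frob a) + a * frob (frob b) + b * frob (frob b)"
    unfolding c dickson_det_def
    by (simp only: frob_add frob_1 expand two_eq_zero mult_zero_left add_0_right)
  also have "\<dots> = Tr3 q (a ^ (q + 1) + a ^ q * b + b ^ (q + 1))"
    by (simp add: Tr3_eq power_q_eq ac_simps)
  finally show ?thesis .
qed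

lemma bij_Fpoly_iff_conditions:
  fixes k :: nat
  defines "s \<equiv> nat (gcd (int k - 1) (int m))"
  shows "bij (Fpoly a b c k) \<longleftrightarrow>
     ((a + b + c) ^ ((q - 1) div (2 ^ s - 1)) \<noteq> 1 \<and>
      ((((a + b + c) ^ q = a + b + c \<and> a + b + c \<noteq> 0) \<and>
        a ^ (q^2 + q + 1) + b ^ (q^2 + q + 1) + c ^ (q^2 + q + 1)
          + Tr3 q (a * b ^ q * c ^ (q^2)) \<noteq> 0)
       \<or> (a + b + c = 0 \<and> Tr3 q (a ^ (q + 1) + a ^ q * b + b ^ (q + 1)) \<noteq> 0)))"
proof -
  define d where "d = a + b + c"
  have d_Fq: "d \<in> Fq \<longleftrightarrow> d ^ q = d"
    by (simp add: Fq_iff frob_eq)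
  consider "d = 0" | "d \<in> Fq - {0}" | "d \<notin> Fq"
    by blast
  then show ?thesis
  proof cases
    case 1
    have "0 < (q - 1) div (2 ^ s - 1)"
      unfolding q_eq s_def using m_pos by (rule div_two_power_gcd_minus_one_pos)
    then have "d ^ ((q - 1) div (2 ^ s - 1)) \<noteq> 1"
      using 1 by (simp add: zero_power)
    moreover have "(\<forall>y. y \<notin> Fq \<longrightarrow> linpoly a b c y \<notin> Fq)
        \<longleftrightarrow> Tr3 q (a ^ (q + 1) + a ^ q * b + b ^ (q + 1)) \<noteq> 0"
      using 1 unfolding d_def
      by (simp add: linpoly_outside_Fq_iff_dickson_det_add_one dickson_det_add_one)
    ultimately show ?thesis
      using 1 unfolding bij_Fpoly_iff d_def by (simp add: zero_power)
  next
    case 2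
    have "(\<forall>y\<in>Fq - {0}. y * y + ((a + b + c) * y) ^ 2 ^ k \<noteq> 0)
        \<longleftrightarrow> (a + b + c) ^ ((q - 1) div (2 ^ s - 1)) \<noteq> 1"
      using 2 unfolding d_def s_def by (rule Fq_units_condition_iff)
    moreover have "(\<forall>y. y \<notin> Fq \<longrightarrow> linpoly a b c y \<notin> Fq)
        \<longleftrightarrow> a ^ (q^2 + q + 1) + b ^ (q^2 + q + 1) + c ^ (q^2 + q + 1)
          + Tr3 q (a * b ^ q * c ^ (q^2)) \<noteq> 0"
      using 2 unfolding d_def dickson_det_eq[symmetric] by (rule linpoly_outside_Fq_iff_dickson_det)
    moreover have "(a + b + c) ^ q = a + b + c" "a + b + c \<noteq> 0"
      using 2 d_Fq by (simp_all add: d_def)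
    ultimately show ?thesis
      unfolding bij_Fpoly_iff by simp
  next
    case 3
    then have "\<not> (\<forall>y. y \<notin> Fq \<longrightarrow> linpoly a b c y \<notin> Fq)"
      unfolding d_def using ex_outside_Fq_linpoly_in_Fq by blast
    moreover have "(a + b + c) ^ q \<noteq> a + b + c" "a + b + c \<noteq> 0"
      using 3 d_Fq Fq_0 by (auto simp: d_def)
    ultimately show ?thesis
      unfolding bij_Fpoly_iff by simp
  qed
qed

end

theorem mainTheorem5:
  fixes a b c :: "'a::{field,finite}" and m k :: nat
  assumes m: "m \<ge> 1"
    and card: "card (UNIV :: 'a set) = 2 ^ (3 * m)"
    and k: "k < m"
  defines "q \<equiv> (2::nat) ^ m"
  defines "s \<equiv> nat (gcd (int k - 1) (int m))"
  defines "L \<equiv> (\<lambda>x::'a. (a * x + b * x ^ q + c * x ^ (q ^ 2)) ^ (2 ^ k))"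
  shows "is_perm (\<lambda>x. Tr3 q (x ^ (q + 1)) + L x) \<longleftrightarrow>
     ((a + b + c) ^ ((q - 1) div (2 ^ s - 1)) \<noteq> 1 \<and>
      ((((a + b + c) ^ q = a + b + c \<and> a + b + c \<noteq> 0) \<and>
        a ^ (q^2 + q + 1) + b ^ (q^2 + q + 1) + c ^ (q^2 + q + 1)
          + Tr3 q (a * b ^ q * c ^ (q^2)) \<noteq> 0)
       \<or> (a + b + c = 0 \<and> Tr3 q (a ^ (q + 1) + a ^ q * b + b ^ (q + 1)) \<noteq> 0)))"
proof -
  interpret cubic_extension_char2 q m "\<lambda>x::'a. x ^ q"
    using m by unfold_locales (simp_all add: card q_def power_mult[symmetric] mult.commute)
  have F: "(\<lambda>x. Tr3 q (x ^ (q + 1)) + L x) = Fpoly a b c k"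
    unfolding L_def by (rule ext) (rule Fpoly_eq[symmetric])
  show ?thesis
    unfolding is_perm_def F s_def by (rule bij_Fpoly_iff_conditions)
qed

end
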